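(* Let $p$ be a prime and let $G\cong C_{p^2}\times C_p$ be the non-cyclic metacyclic abelian group of order $p^3$. Then there exist at least $p+1$ pairwise non-isomorphic local nearrings whose additive group is isomorphic to $G$.
   Context: A (left) nearring is a set $R$ with two binary operations $+$ and $\cdot$ such that $(R,+)$ is a group with neutral element $0$, $(R,\cdot)$ is a semigroup, and $x\cdot(y+z)=x\cdot y+x\cdot z$ for all $x,y,z\in R$. A nearring with identity is one where $(R,\cdot)$ is a monoid. A nearring $R$ with identity is called local if the set $L$ of all non-invertible elements of $(R,\cdot)$ is a subgroup of $(R,+)$. The additive group of $R$ is $(R,+)$. Two nearrings are isomorphic if there is a bijection preserving both operations. *)

theory Defs
  imports "HOL-Algebra.Algebra"
begin

definition nearring :: "('a, 'm) ring_scheme \<Rightarrow> bool" where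
  "nearring R \<longleftrightarrow>
     group (add_monoid R) \<and>
     (\<forall>x\<in>carrier R. \<forall>y\<in>carrier R. x \<otimes>\<^bsub>R\<^esub> y \<in> carrier R) \<and>
     (\<forall>x\<in>carrier R. \<forall>y\<in>carrier R. \<forall>z\<in>carrier R.
        (x \<otimes>\<^bsub>R\<^esub> y) \<otimes>\<^bsub>R\<^esub> z = x \<otimes>\<^bsub>R\<^esub> (y \<otimes>\<^bsub>R\<^esub> z)) \<and>
     (\<forall>x\<in>carrier R. \<forall>y\<in>carrier R. \<forall>z\<in>carrier R.
        x \<otimes>\<^bsub>R\<^esub> (y \<oplus>\<^bsub>R\<^esub> z) = x \<otimes>\<^bsub>R\<^esub> y \<oplus>\<^bsub>R\<^esub> x \<otimes>\<^bsub>R\<^esub> z)"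

definition nearring_1 :: "('a, 'm) ring_scheme \<Rightarrow> bool" where
  "nearring_1 R \<longleftrightarrow> nearring R \<and> monoid R"

definition local_nearring :: "('a, 'm) ring_scheme \<Rightarrow> bool" where
  "local_nearring R \<longleftrightarrow> nearring_1 R \<and>
     subgroup (carrier R - Units R) (add_monoid R)"

definition nearring_iso :: "('a, 'm) ring_scheme \<Rightarrow> ('b, 'n) ring_scheme \<Rightarrow> bool" where
  "nearring_iso R S \<longleftrightarrow> (\<exists>f. bij_betw f (carrier R) (carrier S) \<and>
     (\<forall>x\<in>carrier R. \<forall>y\<in>carrier R.
        f (x \<oplus>\<^bsub>R\<^esub> y) = f x \<oplus>\<^bsub>S\<^esub> f y \<and> f (x \<otimes>\<^bsub>R\<^esub> y) = f x \<otimes>\<^bsub>S\<^esub> f y))"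

end

theory Submission
  imports Defs "HOL-Number_Theory.Number_Theory" "HOL-Library.Product_Plus"
begin

(* On G = Z_{p^2} x Z_p the products (a, b)(x, y) = (ax + p c b y, bx + a^e y) are left
   distributive, and associative when c = 0 or e = 1. An element is a unit exactly when its first
   coordinate is prime to p, so the nonunits form the subgroup pZ_{p^2} x Z_p and the nearring is
   local. Taking c = 0 with e = 0, ..., p - 1, and c = e = 1 gives p + 1 such nearrings. They are
   told apart by isomorphism invariants: whether products of two nonunits vanish, whether they
   lie in pG, and for which j every unit u and nonunit n satisfy un = n u^j modulo pG. For c = 0
   the last one holds for j = e but fails for any other j < p: as x^(j-e) = 1 has fewer than
   p - 1 solutions modulo p, some g prime to p has g^e and g^j incongruent. *)

section \<open>Isomorphisms of monoids\<close>

lemma monoid_iso_sym: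
  assumes "monoid G" and "h \<in> iso G H"
  shows "inv_into (carrier G) h \<in> iso H G"
proof -
  have bij: "bij_betw h (carrier G) (carrier H)" and hom: "h \<in> hom G H"
    using assms(2) by (auto simp: iso_def)
  let ?g = "inv_into (carrier G) h"
  have g: "bij_betw ?g (carrier H) (carrier G)"
    using bij by (rule bij_betw_inv_into)
  have "?g (x \<otimes>\<^bsub>H\<^esub> y) = ?g x \<otimes>\<^bsub>G\<^esub> ?g y" if "x \<in> carrier H" "y \<in> carrier H" for x y
  proof (rule inv_into_f_eq)
    have "?g x \<in> carrier G" "?g y \<in> carrier G"
      using g that by (auto dest: bij_betwE)
    then show "?g x \<otimes>\<^bsub>G\<^esub> ?g y \<in> carrier G"
      and "h (?g x \<otimes>\<^bsub>G\<^esub> ?g y) = x \<otimes>\<^bsub>H\<^esub> y"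
      using assms(1) hom bij that by (auto simp: hom_mult monoid.m_closed bij_betw_inv_into_right)
  qed (use bij in \<open>simp add: bij_betw_def\<close>)
  then show ?thesis
    using g by (auto simp: iso_def hom_def dest: bij_betwE)
qed

lemma iso_one:
  assumes "monoid G" and "monoid H" and "h \<in> iso G H"
  shows "h \<one>\<^bsub>G\<^esub> = \<one>\<^bsub>H\<^esub>"
proof -
  have hom: "h \<in> hom G H" and "h ` carrier G = carrier H"
    using assms(3) by (auto simp: iso_iff)
  then obtain x where x: "x \<in> carrier G" "h x = \<one>\<^bsub>H\<^esub>"
    using monoid.one_closed[OF assms(2)] by (metis imageE)
  have "h \<one>\<^bsub>G\<^esub> = h \<one>\<^bsub>G\<^esub> \<otimes>\<^bsub>H\<^esub> h x"
    using x assms(1,2) hom by (simp add: hom_in_carrier monoid.r_one)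
  also have "\<dots> = h x"
    using x(1) assms(1) hom by (metis hom_mult monoid.l_one monoid.one_closed)
  finally show ?thesis
    using x by simp
qed

lemma iso_nat_pow:
  assumes "monoid G" and "monoid H" and "h \<in> iso G H" and "x \<in> carrier G"
  shows "h (x [^]\<^bsub>G\<^esub> (n::nat)) = h x [^]\<^bsub>H\<^esub> n"
proof (induction n)
  case 0
  then show ?case
    using iso_one[OF assms(1-3)] by simp
next
  case (Suc n)
  have "h \<in> hom G H"
    using assms(3) by (rule iso_imp_homomorphism)
  with Suc show ?case
    using assms(1,4) by (simp add: hom_mult monoid.nat_pow_closed)
qed

lemma iso_Units_closed:
  assumes "monoid G" and "monoid H" and "h \<in> iso G H" and "x \<in> Units G"
  shows "h x \<in> Units H"
proof -
  obtain y where y: "y \<in> carrier G" "y \<otimes>\<^bsub>G\<^esub> x = \<one>\<^bsub>G\<^esub>" "x \<otimes>\<^bsub>G\<^esub> y = \<one>\<^bsub>G\<^esub>"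
    and x: "x \<in> carrier G"
    using assms(4) unfolding Units_def by blast
  then have "h y \<otimes>\<^bsub>H\<^esub> h x = \<one>\<^bsub>H\<^esub>" and "h x \<otimes>\<^bsub>H\<^esub> h y = \<one>\<^bsub>H\<^esub>"
    using assms(3) iso_one[OF assms(1-3)] by (auto simp: iso_iff hom_mult simp flip: hom_mult)
  moreover have "h x \<in> carrier H" "h y \<in> carrier H"
    using assms(3) x y by (auto simp: iso_iff hom_in_carrier)
  ultimately show ?thesis
    unfolding Units_def by blast
qed

lemma iso_image_Units:
  assumes "monoid G" and "monoid H" and "h \<in> iso G H"
  shows "h ` Units G = Units H"
proof
  show "h ` Units G \<subseteq> Units H"
    using iso_Units_closed[OF assms] by blast
  show "Units H \<subseteq> h ` Units G"
  proof
    fix y assume "y \<in> Units H"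
    let ?g = "inv_into (carrier G) h"
    have "?g y \<in> Units G"
      using iso_Units_closed[OF assms(2,1) monoid_iso_sym[OF assms(1,3)] \<open>y \<in> Units H\<close>] .
    moreover have "h (?g y) = y"
      using assms(3) \<open>y \<in> Units H\<close> by (auto simp: iso_def bij_betw_inv_into_right Units_def)
    ultimately show "y \<in> h ` Units G"
      by (metis imageI)
  qed
qed

lemma (in monoid) subset_Units_if_right_inverses:
  assumes "A \<subseteq> carrier G" and "\<And>u. u \<in> A \<Longrightarrow> \<exists>v\<in>A. u \<otimes> v = \<one>"
  shows "A \<subseteq> Units G"
proof
  fix u assume "u \<in> A"
  then obtain v where v: "v \<in> A" "u \<otimes> v = \<one>"
    using assms(2) by blast
  then obtain w where w: "w \<in> A" "v \<otimes> w = \<one>"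
    using assms(2) by blast
  have carr: "u \<in> carrier G" "v \<in> carrier G" "w \<in> carrier G"
    using \<open>u \<in> A\<close> v w assms(1) by auto
  have "u = u \<otimes> (v \<otimes> w)"
    using carr w by simp
  also have "\<dots> = w"
    using carr v by (simp flip: m_assoc)
  finally have "v \<otimes> u = \<one>"
    using w by simp
  then show "u \<in> Units G"
    using \<open>u \<in> A\<close> v assms(1) unfolding Units_def by blast
qed

definition nonunits :: "('a, 'b) monoid_scheme \<Rightarrow> 'a set" where
  "nonunits R = carrier R - Units R"

lemma iso_image_nonunits:
  assumes "monoid G" and "monoid H" and "h \<in> iso G H"
  shows "h ` nonunits G = nonunits H"
proof -
  have "inj_on h (carrier G)" and "h ` carrier G = carrier H"
    using assms(3) by (auto simp: iso_iff)
  then show ?thesis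
    unfolding nonunits_def iso_image_Units[OF assms, symmetric]
    by (simp add: inj_on_image_set_diff Units_def)
qed

definition multiples :: "('a, 'b) ring_scheme \<Rightarrow> nat \<Rightarrow> 'a set" where
  "multiples R k = (\<lambda>x. x [^]\<^bsub>add_monoid R\<^esub> k) ` carrier R"

lemma multiples_0: "carrier R \<noteq> {} \<Longrightarrow> multiples R 0 = {\<zero>\<^bsub>R\<^esub>}"
  by (simp add: multiples_def image_constant_conv)

lemma multiples_subset_carrier:
  "monoid (add_monoid R) \<Longrightarrow> multiples R k \<subseteq> carrier R"
  unfolding multiples_def using monoid.nat_pow_closed[of "add_monoid R"] by auto

lemma iso_image_multiples:
  assumes "monoid (add_monoid R)" and "monoid (add_monoid S)"
    and "f \<in> iso (add_monoid R) (add_monoid S)"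
  shows "f ` multiples R k = multiples S k"
proof -
  have "f ` multiples R k = (\<lambda>x. f x [^]\<^bsub>add_monoid S\<^esub> k) ` carrier R"
    unfolding multiples_def image_image using iso_nat_pow[OF assms] by simp
  also have "\<dots> = (\<lambda>y. y [^]\<^bsub>add_monoid S\<^esub> k) ` f ` carrier R"
    by (simp add: image_image)
  also have "\<dots> = multiples S k"
    using assms(3) by (simp add: multiples_def iso_iff)
  finally show ?thesis .
qed

section \<open>Isomorphism invariants of nearrings\<close>

definition nonunit_products_in_multiples :: "('a, 'b) ring_scheme \<Rightarrow> nat \<Rightarrow> bool" where
  "nonunit_products_in_multiples R k \<longleftrightarrow>
     (\<forall>a\<in>nonunits R. \<forall>b\<in>nonunits R. a \<otimes>\<^bsub>R\<^esub> b \<in> multiples R k)"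

definition twisted_commutation :: "('a, 'b) ring_scheme \<Rightarrow> nat \<Rightarrow> nat \<Rightarrow> bool" where
  "twisted_commutation R k j \<longleftrightarrow>
     (\<forall>u\<in>Units R. \<forall>n\<in>nonunits R.
        \<exists>w\<in>multiples R k. u \<otimes>\<^bsub>R\<^esub> n = n \<otimes>\<^bsub>R\<^esub> u [^]\<^bsub>R\<^esub> j \<oplus>\<^bsub>R\<^esub> w)"

lemma nearring_iso_iff_isos:
  "nearring_iso R S \<longleftrightarrow> (\<exists>f. f \<in> iso (add_monoid R) (add_monoid S) \<and> f \<in> iso R S)"
  by (auto simp: nearring_iso_def iso_def hom_def bij_betw_def)

lemma nearring_iso_sym:
  assumes "nearring_1 R" and "nearring_iso R S"
  shows "nearring_iso S R"
proof -
  obtain f where f: "f \<in> iso (add_monoid R) (add_monoid S)" "f \<in> iso R S"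
    using assms(2) nearring_iso_iff_isos by blast
  have "monoid (add_monoid R)" and "monoid R"
    using assms(1) by (simp_all add: nearring_1_def nearring_def group.is_monoid)
  then have "inv_into (carrier R) f \<in> iso (add_monoid S) (add_monoid R)"
    and "inv_into (carrier R) f \<in> iso S R"
    using monoid_iso_sym f by fastforce+
  then show ?thesis
    unfolding nearring_iso_iff_isos by blast
qed

context
  fixes R :: "('a, 'c) ring_scheme" and S :: "('b, 'd) ring_scheme" and f
  assumes R: "nearring_1 R" and S: "nearring_1 S"
    and f_add: "f \<in> iso (add_monoid R) (add_monoid S)" and f_mult: "f \<in> iso R S"
begin

lemma nearring_1_monoids:
  "monoid R" "monoid S" "monoid (add_monoid R)" "monoid (add_monoid S)"
  using R S by (simp_all add: nearring_1_def nearring_def group.is_monoid)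

lemma iso_add: "x \<in> carrier R \<Longrightarrow> y \<in> carrier R \<Longrightarrow> f (x \<oplus>\<^bsub>R\<^esub> y) = f x \<oplus>\<^bsub>S\<^esub> f y"
  using f_add by (simp add: iso_iff hom_def)

lemma iso_mult: "x \<in> carrier R \<Longrightarrow> y \<in> carrier R \<Longrightarrow> f (x \<otimes>\<^bsub>R\<^esub> y) = f x \<otimes>\<^bsub>S\<^esub> f y"
  using f_mult by (simp add: iso_iff hom_def)

lemma nonunit_products_in_multiples_image:
  assumes "nonunit_products_in_multiples R k"
  shows "nonunit_products_in_multiples S k"
  unfolding nonunit_products_in_multiples_def
proof (intro ballI)
  fix a b assume "a \<in> nonunits S" and "b \<in> nonunits S"
  then obtain x y where "x \<in> nonunits R" "y \<in> nonunits R" "a = f x" "b = f y"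
    unfolding iso_image_nonunits[OF nearring_1_monoids(1,2) f_mult, symmetric] by blast
  moreover from this have "x \<otimes>\<^bsub>R\<^esub> y \<in> multiples R k"
    using assms unfolding nonunit_products_in_multiples_def by blast
  ultimately have "a \<otimes>\<^bsub>S\<^esub> b \<in> f ` multiples R k"
    by (simp add: nonunits_def flip: iso_mult)
  then show "a \<otimes>\<^bsub>S\<^esub> b \<in> multiples S k"
    unfolding iso_image_multiples[OF nearring_1_monoids(3,4) f_add] .
qed

lemma twisted_commutation_image:
  assumes "twisted_commutation R k j"
  shows "twisted_commutation S k j"
  unfolding twisted_commutation_def
proof (intro ballI)
  fix a n assume "a \<in> Units S" and "n \<in> nonunits S"
  then obtain x y where xy: "x \<in> Units R" "y \<in> nonunits R" "a = f x" "n = f y"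
    unfolding iso_image_nonunits[OF nearring_1_monoids(1,2) f_mult, symmetric]
      iso_image_Units[OF nearring_1_monoids(1,2) f_mult, symmetric] by blast
  then obtain w where w: "w \<in> multiples R k" "x \<otimes>\<^bsub>R\<^esub> y = y \<otimes>\<^bsub>R\<^esub> x [^]\<^bsub>R\<^esub> j \<oplus>\<^bsub>R\<^esub> w"
    using assms unfolding twisted_commutation_def by blast
  have carrier: "x \<in> carrier R" "y \<in> carrier R" "x [^]\<^bsub>R\<^esub> j \<in> carrier R" "w \<in> carrier R"
    using xy w(1) multiples_subset_carrier[OF nearring_1_monoids(3)]
      monoid.nat_pow_closed[OF nearring_1_monoids(1)]
    by (auto simp: nonunits_def Units_def)
  have "a \<otimes>\<^bsub>S\<^esub> n = f (x \<otimes>\<^bsub>R\<^esub> y)"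
    using xy carrier by (simp add: iso_mult)
  also have "\<dots> = f (y \<otimes>\<^bsub>R\<^esub> x [^]\<^bsub>R\<^esub> j) \<oplus>\<^bsub>S\<^esub> f w"
    unfolding w(2) using carrier by (simp add: iso_add monoid.m_closed[OF nearring_1_monoids(1)])
  also have "\<dots> = n \<otimes>\<^bsub>S\<^esub> a [^]\<^bsub>S\<^esub> j \<oplus>\<^bsub>S\<^esub> f w"
    using carrier xy by (simp add: iso_mult iso_nat_pow[OF nearring_1_monoids(1,2) f_mult])
  finally have "a \<otimes>\<^bsub>S\<^esub> n = n \<otimes>\<^bsub>S\<^esub> a [^]\<^bsub>S\<^esub> j \<oplus>\<^bsub>S\<^esub> f w" .
  moreover have "f w \<in> multiples S k"
    using imageI[OF w(1), of f] unfolding iso_image_multiples[OF nearring_1_monoids(3,4) f_add] .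
  ultimately show "\<exists>w\<in>multiples S k. a \<otimes>\<^bsub>S\<^esub> n = n \<otimes>\<^bsub>S\<^esub> a [^]\<^bsub>S\<^esub> j \<oplus>\<^bsub>S\<^esub> w"
    by (rule bexI)
qed

end

lemma nearring_iso_invariants:
  assumes "nearring_1 R" and "nearring_1 S" and "nearring_iso R S"
  shows "nonunit_products_in_multiples R k \<longleftrightarrow> nonunit_products_in_multiples S k"
    and "twisted_commutation R k j \<longleftrightarrow> twisted_commutation S k j"
proof -
  obtain f where f: "f \<in> iso (add_monoid R) (add_monoid S)" "f \<in> iso R S"
    using assms(3) nearring_iso_iff_isos by blast
  obtain g where g: "g \<in> iso (add_monoid S) (add_monoid R)" "g \<in> iso S R"
    using nearring_iso_sym[OF assms(1,3)] nearring_iso_iff_isos by blast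
  show "nonunit_products_in_multiples R k \<longleftrightarrow> nonunit_products_in_multiples S k"
    using nonunit_products_in_multiples_image[OF assms(1,2) f]
      nonunit_products_in_multiples_image[OF assms(2,1) g] by blast
  show "twisted_commutation R k j \<longleftrightarrow> twisted_commutation S k j"
    using twisted_commutation_image[OF assms(1,2) f] twisted_commutation_image[OF assms(2,1) g]
    by blast
qed

section \<open>The nearrings on Z_{p^2} x Z_p\<close>

definition reduce :: "int \<Rightarrow> int \<times> int \<Rightarrow> int \<times> int" where
  "reduce P u = (fst u mod P^2, snd u mod P)"

definition twisted_mult :: "int \<Rightarrow> int \<Rightarrow> nat \<Rightarrow> int \<times> int \<Rightarrow> int \<times> int \<Rightarrow> int \<times> int" where
  "twisted_mult P c e u v =
     (fst u * fst v + P * (c * snd u * snd v), snd u * fst v + fst u ^ e * snd v)"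

lemma reduce_eq_iff:
  "reduce P u = reduce P v \<longleftrightarrow> [fst u = fst v] (mod P^2) \<and> [snd u = snd v] (mod P)"
  by (simp add: reduce_def cong_def prod_eq_iff)

lemma reduce_reduce [simp]: "reduce P (reduce P u) = reduce P u"
  by (simp add: reduce_def)

lemma reduce_add_left_eq: "reduce P (reduce P u + v) = reduce P (u + v)"
  by (simp add: reduce_def mod_add_left_eq)

lemma reduce_add_right_eq: "reduce P (u + reduce P v) = reduce P (u + v)"
  by (simp add: reduce_def mod_add_right_eq)

lemma cong_mult_square_modulus: "[x = y] (mod P) \<Longrightarrow> [P * x = P * y] (mod P^2)"
  for P x y :: int
  by (simp add: cong_iff_dvd_diff power2_eq_square flip: right_diff_distrib)

lemma cong_square_imp_cong: "[x = y] (mod P^2) \<Longrightarrow> [x = y] (mod P)"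
  for P x y :: int
  by (erule cong_dvd_modulus) (simp add: power2_eq_square)

lemma twisted_mult_cong:
  assumes "reduce P u = reduce P u'" and "reduce P v = reduce P v'"
  shows "reduce P (twisted_mult P c e u v) = reduce P (twisted_mult P c e u' v')"
proof -
  have u: "[fst u = fst u'] (mod P^2)" "[snd u = snd u'] (mod P)"
    and v: "[fst v = fst v'] (mod P^2)" "[snd v = snd v'] (mod P)"
    using assms by (simp_all add: reduce_eq_iff)
  note u' = cong_square_imp_cong[OF u(1)] and v' = cong_square_imp_cong[OF v(1)]
  have "[P * (c * snd u * snd v) = P * (c * snd u' * snd v')] (mod P^2)"
    by (intro cong_mult_square_modulus cong_mult cong_refl u(2) v(2))
  then have "[fst u * fst v + P * (c * snd u * snd v) =
      fst u' * fst v' + P * (c * snd u' * snd v')] (mod P^2)"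
    by (rule cong_add[OF cong_mult[OF u(1) v(1)]])
  moreover have "[snd u * fst v + fst u ^ e * snd v =
      snd u' * fst v' + fst u' ^ e * snd v'] (mod P)"
    by (intro cong_add cong_mult cong_pow u(2) v' u' v(2))
  ultimately show ?thesis
    by (simp add: reduce_eq_iff twisted_mult_def)
qed

lemma reduce_twisted_mult_left_eq [simp]:
  "reduce P (twisted_mult P c e (reduce P u) v) = reduce P (twisted_mult P c e u v)"
  by (rule twisted_mult_cong) simp_all

lemma reduce_twisted_mult_right_eq [simp]:
  "reduce P (twisted_mult P c e u (reduce P v)) = reduce P (twisted_mult P c e u v)"
  by (rule twisted_mult_cong) simp_all

lemma twisted_mult_assoc:
  "c = 0 \<or> e = 1 \<Longrightarrow>
    twisted_mult P c e (twisted_mult P c e u v) w = twisted_mult P c e u (twisted_mult P c e v w)"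
  by (auto simp: twisted_mult_def algebra_simps)

lemma twisted_mult_add_right:
  "twisted_mult P c e u (v + w) = twisted_mult P c e u v + twisted_mult P c e u w"
  by (simp add: twisted_mult_def algebra_simps)

lemma twisted_mult_one_left [simp]: "twisted_mult P c e (1, 0) u = u"
  and twisted_mult_one_right [simp]: "twisted_mult P c e u (1, 0) = u"
  by (simp_all add: twisted_mult_def)

definition twisted_nearring :: "int \<Rightarrow> int \<Rightarrow> nat \<Rightarrow> (int \<times> int) ring" where
  "twisted_nearring P c e =
     \<lparr>carrier = {0..<P^2} \<times> {0..<P}, monoid.mult = (\<lambda>u v. reduce P (twisted_mult P c e u v)),
      one = (1, 0), ring.zero = 0, ring.add = (\<lambda>u v. reduce P (u + v))\<rparr>"

lemma twisted_nearring_simps [simp]: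
  "carrier (twisted_nearring P c e) = {0..<P^2} \<times> {0..<P}"
  "u \<otimes>\<^bsub>twisted_nearring P c e\<^esub> v = reduce P (twisted_mult P c e u v)"
  "\<one>\<^bsub>twisted_nearring P c e\<^esub> = (1, 0)"
  "\<zero>\<^bsub>twisted_nearring P c e\<^esub> = 0"
  "u \<oplus>\<^bsub>twisted_nearring P c e\<^esub> v = reduce P (u + v)"
  by (simp_all add: twisted_nearring_def)

lemma reduce_range: "P > 0 \<Longrightarrow> reduce P u \<in> {0..<P^2} \<times> {0..<P}"
  by (simp add: reduce_def)

lemma reduce_carrier: "u \<in> carrier (twisted_nearring P c e) \<Longrightarrow> reduce P u = u"
  by (auto simp: reduce_def)

lemma monoid_twisted_nearring:
  assumes "P > 1" and "c = 0 \<or> e = 1"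
  shows "monoid (twisted_nearring P c e)"
proof -
  have "1 < P^2" and "P > 0"
    using \<open>P > 1\<close> by (simp_all add: one_less_power)
  then show ?thesis
    using assms by unfold_locales
      (auto simp: reduce_range reduce_carrier twisted_mult_assoc[OF assms(2)])
qed

lemma add_monoid_twisted_nearring:
  "p > 0 \<Longrightarrow>
    add_monoid (twisted_nearring (int p) c e) = integer_mod_group (p^2) \<times>\<times> integer_mod_group p"
  by (auto simp: twisted_nearring_def DirProd_def integer_mod_group_def reduce_def fun_eq_iff
      zero_prod_def)

lemma nearring_twisted_nearring:
  assumes "p > 0" and "c = 0 \<or> e = 1"
  shows "nearring (twisted_nearring (int p) c e)"
  unfolding nearring_def
proof (intro conjI)
  show "group (add_monoid (twisted_nearring (int p) c e))"
    unfolding add_monoid_twisted_nearring[OF \<open>p > 0\<close>] by (simp add: DirProd_group)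
qed (use assms in \<open>auto simp: reduce_range twisted_mult_assoc[OF assms(2)]
      twisted_mult_add_right reduce_add_left_eq reduce_add_right_eq\<close>)

lemma prime_coprime_square_iff: "Factorial_Ring.prime P \<Longrightarrow> coprime a (P^2) \<longleftrightarrow> \<not> P dvd a"
  for P a :: int
  by (metis coprime_common_divisor coprime_power_right_iff dvd_refl
      not_prime_unit prime_imp_power_coprime zero_neq_numeral)

lemma twisted_mult_right_inverse:
  assumes "Factorial_Ring.prime P" and "\<not> P dvd fst u"
  obtains v where "\<not> P dvd fst v" and "reduce P (twisted_mult P c e u v) = (1, 0)"
proof -
  define a b where "a = fst u" and "b = snd u"
  obtain a' where a': "[a * a' = 1] (mod P^2)"
    using assms cong_solve_coprime_int prime_coprime_square_iff unfolding a_def by blast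
  \<comment> \<open>the first coordinate of u (x, -b x a'^e), divided by x\<close>
  define d where "d = a - P * (c * b * b * a' ^ e)"
  have "\<not> P dvd d"
    using \<open>\<not> P dvd fst u\<close> unfolding d_def a_def by (simp add: dvd_diff_left_iff)
  then obtain x where x: "[d * x = 1] (mod P^2)"
    using assms cong_solve_coprime_int prime_coprime_square_iff by blast
  define y where "y = - (b * x * a' ^ e)"
  have "[(a * a') ^ e = 1] (mod P)"
    using cong_pow[OF cong_square_imp_cong[OF a']] by simp
  then have "[b * x * (1 - (a * a') ^ e) = b * x * (1 - 1)] (mod P)"
    by (intro cong_mult cong_diff cong_refl) auto
  moreover have "twisted_mult P c e u (x, y) = (d * x, b * x * (1 - (a * a') ^ e))"
    by (simp add: twisted_mult_def a_def b_def d_def y_def algebra_simps power_mult_distrib)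
  moreover have "P > 1"
    using assms(1) by (simp add: prime_gt_1_int)
  ultimately have "reduce P (twisted_mult P c e u (x, y)) = reduce P (1, 0)"
    using x by (simp add: reduce_eq_iff)
  also have "\<dots> = (1, 0)"
    using \<open>P > 1\<close> by (simp add: reduce_def one_less_power)
  moreover have "\<not> P dvd x"
    using cong_dvd_iff[OF cong_square_imp_cong[OF x]] \<open>P > 1\<close> by (auto simp: zdvd1_eq)
  ultimately show ?thesis
    using that[of "(x, y)"] by simp
qed

lemma Units_twisted_nearring:
  assumes "Factorial_Ring.prime P" and "c = 0 \<or> e = 1"
  shows "Units (twisted_nearring P c e) = {u \<in> carrier (twisted_nearring P c e). \<not> P dvd fst u}"
    (is "_ = ?A")
proof
  have "P > 1"
    using assms(1) by (simp add: prime_gt_1_int)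
  interpret monoid "twisted_nearring P c e"
    using monoid_twisted_nearring[OF \<open>P > 1\<close> assms(2)] .
  show "?A \<subseteq> Units (twisted_nearring P c e)"
  proof (rule subset_Units_if_right_inverses)
    fix u assume "u \<in> ?A"
    then obtain v where "\<not> P dvd fst v" and "reduce P (twisted_mult P c e u v) = (1, 0)"
      using twisted_mult_right_inverse[OF assms(1)] by blast
    moreover have "P dvd P^2"
      by (simp add: power2_eq_square)
    ultimately have "reduce P v \<in> ?A"
      using \<open>P > 1\<close> by (auto simp: reduce_def dvd_mod_iff)
    then show "\<exists>v\<in>?A. u \<otimes>\<^bsub>twisted_nearring P c e\<^esub> v = \<one>\<^bsub>twisted_nearring P c e\<^esub>"
      using \<open>reduce P (twisted_mult P c e u v) = (1, 0)\<close> by (intro bexI[of _ "reduce P v"]) simp_all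
  qed auto
next
  show "Units (twisted_nearring P c e) \<subseteq> ?A"
  proof
    fix u assume "u \<in> Units (twisted_nearring P c e)"
    then obtain v where u: "u \<in> carrier (twisted_nearring P c e)"
      and uv: "fst (twisted_mult P c e u v) mod P^2 = 1"
      unfolding Units_def by (auto simp: reduce_def)
    have "\<not> P dvd fst u"
    proof
      assume "P dvd fst u"
      moreover have "P dvd P^2"
        by (simp add: power2_eq_square)
      ultimately have "P dvd fst (twisted_mult P c e u v) mod P^2"
        by (simp add: twisted_mult_def dvd_mod_iff)
      then show False
        using uv assms(1) not_prime_unit by auto
    qed
    with u show "u \<in> ?A"
      by blast
  qed
qed

lemma local_nearring_twisted_nearring:
  assumes "Factorial_Ring.prime p" and "c = 0 \<or> e = 1"
  shows "local_nearring (twisted_nearring (int p) c e)"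
proof -
  have "p > 0" and "int p > 1" and "Factorial_Ring.prime (int p)"
    using assms(1) prime_gt_0_nat prime_gt_1_nat by auto
  let ?G = "integer_mod_group (p^2) \<times>\<times> integer_mod_group p"
  have "(\<lambda>u. fst u mod int p) \<in> hom ?G (integer_mod_group p)"
    using \<open>p > 0\<close>
    by (auto simp: hom_def carrier_integer_mod_group DirProd_def mod_add_eq mod_mod_cancel)
  then have "group_hom ?G (integer_mod_group p) (\<lambda>u. fst u mod int p)"
    by (simp add: group_hom_def group_hom_axioms_def DirProd_group)
  then have "subgroup (kernel ?G (integer_mod_group p) (\<lambda>u. fst u mod int p)) ?G"
    by (rule group_hom.subgroup_kernel)
  moreover have "kernel ?G (integer_mod_group p) (\<lambda>u. fst u mod int p) =
      carrier (twisted_nearring (int p) c e) - Units (twisted_nearring (int p) c e)"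
    using \<open>p > 0\<close>
    by (auto simp: kernel_def carrier_integer_mod_group
        Units_twisted_nearring[OF \<open>Factorial_Ring.prime (int p)\<close> assms(2)])
  ultimately show ?thesis
    unfolding local_nearring_def nearring_1_def add_monoid_twisted_nearring[OF \<open>p > 0\<close>]
    using nearring_twisted_nearring[OF \<open>p > 0\<close> assms(2)]
      monoid_twisted_nearring[OF \<open>int p > 1\<close> assms(2)]
    by simp
qed

section \<open>Invariants of the twisted nearrings\<close>

lemma nonunits_twisted_nearring:
  assumes "Factorial_Ring.prime P" and "c = 0 \<or> e = 1"
  shows "nonunits (twisted_nearring P c e) = {u \<in> carrier (twisted_nearring P c e). P dvd fst u}"
  using Units_twisted_nearring[OF assms] unfolding nonunits_def by blast

lemma nonunit_0_1:
  assumes "Factorial_Ring.prime P" and "c = 0 \<or> e = 1"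
  shows "(0, 1) \<in> nonunits (twisted_nearring P c e)"
  using assms nonunits_twisted_nearring[OF assms] by (simp add: prime_gt_1_int one_less_power)

lemma multiples_0_twisted_nearring: "P > 0 \<Longrightarrow> multiples (twisted_nearring P c e) 0 = {0}"
  by (subst multiples_0) (auto intro: exI[of _ 0])

lemma add_pow_twisted_nearring:
  "x [^]\<^bsub>add_monoid (twisted_nearring P c e)\<^esub> (k::nat) = reduce P (int k * fst x, int k * snd x)"
proof (induction k)
  case 0
  then show ?case
    by (simp add: reduce_def zero_prod_def)
next
  case (Suc k)
  have "x [^]\<^bsub>add_monoid (twisted_nearring P c e)\<^esub> Suc k =
      reduce P (reduce P (int k * fst x, int k * snd x) + x)"
    by (simp only: nat_pow_Suc Suc.IH) simp
  also have "\<dots> = reduce P (int (Suc k) * fst x, int (Suc k) * snd x)"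
    by (simp only: reduce_add_left_eq) (simp add: plus_prod_def distrib_right add.commute)
  finally show ?case .
qed

lemma snd_multiples_twisted_nearring:
  "w \<in> multiples (twisted_nearring (int p) c e) p \<Longrightarrow> snd w = 0"
  unfolding multiples_def add_pow_twisted_nearring by (auto simp: reduce_def)

lemma reduce_in_multiples_twisted_nearring:
  assumes "p > 0"
  shows "reduce (int p) (int p * m, 0) \<in> multiples (twisted_nearring (int p) c e) p"
proof -
  have "reduce (int p) (int p * m, 0) = reduce (int p) (int p * (m mod (int p)^2), 0)"
    by (simp add: reduce_eq_iff cong_def mod_mult_right_eq)
  then show ?thesis
    using assms unfolding multiples_def add_pow_twisted_nearring
    by (intro image_eqI[of _ _ "reduce (int p) (m, 0)"]) (simp_all add: reduce_def)
qed

lemma twisted_mult_nonunits: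
  assumes "e \<ge> 1" and "P dvd fst u" and "P dvd fst v"
  shows "reduce P (twisted_mult P c e u v) = reduce P (P * (c * snd u * snd v), 0)"
proof -
  have "P^2 dvd fst u * fst v"
    using assms(2,3) by (simp add: power2_eq_square mult_dvd_mono)
  moreover have "P dvd fst u ^ e"
    using assms(1,2) by (cases e) auto
  ultimately show ?thesis
    using assms(3) by (simp add: reduce_eq_iff twisted_mult_def cong_iff_dvd_diff)
qed

lemma nonunit_products_in_multiples_twisted_nearring:
  assumes "Factorial_Ring.prime p" and "c = 0 \<or> e = 1" and "e \<ge> 1"
  shows "nonunit_products_in_multiples (twisted_nearring (int p) c e) p"
  unfolding nonunit_products_in_multiples_def
proof (intro ballI)
  fix u v
  assume "u \<in> nonunits (twisted_nearring (int p) c e)" "v \<in> nonunits (twisted_nearring (int p) c e)"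
  then have "int p dvd fst u" and "int p dvd fst v"
    using nonunits_twisted_nearring[of "int p", OF _ assms(2)] assms(1) by auto
  then show "u \<otimes>\<^bsub>twisted_nearring (int p) c e\<^esub> v \<in> multiples (twisted_nearring (int p) c e) p"
    using twisted_mult_nonunits[OF assms(3)] reduce_in_multiples_twisted_nearring
      prime_gt_0_nat[OF assms(1)]
    by simp
qed

lemma nonunit_products_zero_twisted_nearring:
  assumes "Factorial_Ring.prime p" and "e \<ge> 1"
  shows "nonunit_products_in_multiples (twisted_nearring (int p) 0 e) 0"
  unfolding nonunit_products_in_multiples_def
proof (intro ballI)
  fix u v
  assume "u \<in> nonunits (twisted_nearring (int p) 0 e)" "v \<in> nonunits (twisted_nearring (int p) 0 e)"
  then have "int p dvd fst u" and "int p dvd fst v"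
    using nonunits_twisted_nearring[of "int p" 0 e] assms(1) by auto
  moreover have "multiples (twisted_nearring (int p) 0 e) 0 = {0}"
    using prime_gt_0_nat[OF assms(1)] by (simp add: multiples_0_twisted_nearring)
  ultimately show
    "u \<otimes>\<^bsub>twisted_nearring (int p) 0 e\<^esub> v \<in> multiples (twisted_nearring (int p) 0 e) 0"
    using twisted_mult_nonunits[OF assms(2)] by (simp add: reduce_def zero_prod_def)
qed

lemma not_nonunit_products_in_multiples_twisted_nearring_0_0:
  assumes "Factorial_Ring.prime p"
  shows "\<not> nonunit_products_in_multiples (twisted_nearring (int p) 0 0) p"
proof
  assume "nonunit_products_in_multiples (twisted_nearring (int p) 0 0) p"
  then have
    "(0, 1) \<otimes>\<^bsub>twisted_nearring (int p) 0 0\<^esub> (0, 1) \<in> multiples (twisted_nearring (int p) 0 0) p"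
    using nonunit_0_1[of "int p" 0 0] assms
    unfolding nonunit_products_in_multiples_def by simp
  then show False
    using snd_multiples_twisted_nearring prime_gt_1_nat[OF assms]
    by (fastforce simp: twisted_mult_def reduce_def)
qed

lemma not_nonunit_products_zero_twisted_nearring_1_1:
  assumes "Factorial_Ring.prime p"
  shows "\<not> nonunit_products_in_multiples (twisted_nearring (int p) 1 1) 0"
proof
  assume "nonunit_products_in_multiples (twisted_nearring (int p) 1 1) 0"
  then have
    "(0, 1) \<otimes>\<^bsub>twisted_nearring (int p) 1 1\<^esub> (0, 1) \<in> multiples (twisted_nearring (int p) 1 1) 0"
    using nonunit_0_1[of "int p" 1 1] assms
    unfolding nonunit_products_in_multiples_def by simp
  moreover have "multiples (twisted_nearring (int p) 1 1) 0 = {0}"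
    using prime_gt_0_nat[OF assms(1)] by (simp add: multiples_0_twisted_nearring)
  moreover have "int p < (int p)^2"
    using prime_gt_1_nat[OF assms] by (simp add: power2_eq_square)
  ultimately show False
    by (simp add: twisted_mult_def reduce_def zero_prod_def)
qed

lemma fst_nat_pow_twisted_nearring:
  assumes "P > 1"
  shows "fst (u [^]\<^bsub>twisted_nearring P 0 e\<^esub> (k::nat)) = fst u ^ k mod P^2"
proof (induction k)
  case 0
  then show ?case
    using assms by (simp add: one_less_power)
next
  case (Suc k)
  then show ?case
    by (simp add: reduce_def twisted_mult_def mod_mult_right_eq mult.commute)
qed

lemma twisted_nearring_commutation_identity:
  assumes "P > 1" and "i \<ge> 1" and "fst n = P * m"
  shows "u \<otimes>\<^bsub>twisted_nearring P 0 i\<^esub> n =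
    n \<otimes>\<^bsub>twisted_nearring P 0 i\<^esub> u [^]\<^bsub>twisted_nearring P 0 i\<^esub> i
      \<oplus>\<^bsub>twisted_nearring P 0 i\<^esub> reduce P (P * (m * (fst u - fst u ^ i)), 0)"
proof -
  define a s where "a = fst u" and "s = u [^]\<^bsub>twisted_nearring P 0 i\<^esub> i"
  have s: "[fst s = a ^ i] (mod P^2)"
    unfolding s_def a_def fst_nat_pow_twisted_nearring[OF assms(1)] by (simp add: cong_def)
  have "[a * (P * m) = P * m * fst s + P * (m * (a - a ^ i))] (mod P^2)"
  proof -
    have "[P * m * fst s + P * (m * (a - a ^ i)) = P * m * a ^ i + P * (m * (a - a ^ i))] (mod P^2)"
      by (intro cong_add cong_mult cong_refl s)
    then show ?thesis
      by (simp add: algebra_simps cong_sym)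
  qed
  moreover have "[snd u * (P * m) + a ^ i * snd n = snd n * fst s + (P * m) ^ i * snd s] (mod P)"
  proof -
    have "P dvd (P * m) ^ i"
      using assms(2) by (cases i) auto
    moreover have "P dvd fst s - a ^ i"
      using cong_square_imp_cong[OF s] by (simp add: cong_iff_dvd_diff)
    ultimately have "P dvd P * (snd u * m) - snd n * (fst s - a ^ i) - (P * m) ^ i * snd s"
      by (meson dvd_diff dvd_mult dvd_mult2 dvd_triv_left)
    then show ?thesis
      unfolding cong_iff_dvd_diff by (simp add: algebra_simps)
  qed
  ultimately have "reduce P (twisted_mult P 0 i u n) =
      reduce P (twisted_mult P 0 i n s + (P * (m * (a - a ^ i)), 0))"
    using assms(3) by (simp add: reduce_eq_iff twisted_mult_def a_def)
  then show ?thesis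
    unfolding s_def a_def by (simp add: reduce_add_left_eq reduce_add_right_eq)
qed

lemma twisted_commutation_twisted_nearring:
  assumes "Factorial_Ring.prime p" and "i \<ge> 1"
  shows "twisted_commutation (twisted_nearring (int p) 0 i) p i"
  unfolding twisted_commutation_def
proof (intro ballI)
  fix u n :: "int \<times> int"
  assume "n \<in> nonunits (twisted_nearring (int p) 0 i)"
  then obtain m where "fst n = int p * m"
    using nonunits_twisted_nearring[of "int p"] assms(1) by auto
  moreover have "int p > 1"
    using prime_gt_1_nat[OF assms(1)] by simp
  moreover have "reduce (int p) (int p * (m * (fst u - fst u ^ i)), 0)
      \<in> multiples (twisted_nearring (int p) 0 i) p"
    using prime_gt_0_nat[OF assms(1)] by (rule reduce_in_multiples_twisted_nearring)
  ultimately show "\<exists>w\<in>multiples (twisted_nearring (int p) 0 i) p.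
      u \<otimes>\<^bsub>twisted_nearring (int p) 0 i\<^esub> n =
      n \<otimes>\<^bsub>twisted_nearring (int p) 0 i\<^esub> u [^]\<^bsub>twisted_nearring (int p) 0 i\<^esub> i
        \<oplus>\<^bsub>twisted_nearring (int p) 0 i\<^esub> w"
    using twisted_nearring_commutation_identity[OF _ assms(2)] by blast
qed

lemma not_twisted_commutation_twisted_nearring:
  assumes "Factorial_Ring.prime p" and "j \<ge> 1" and "0 < g" "g < p" and "\<not> [g ^ i = g ^ j] (mod p)"
  shows "\<not> twisted_commutation (twisted_nearring (int p) 0 j) p i"
proof
  define P where "P = int p"
  have "P > 1" "Factorial_Ring.prime P"
    using assms(1) prime_gt_1_nat unfolding P_def by auto
  have "int g < P^2"
    using assms(4) \<open>P > 1\<close> unfolding P_def by (smt (verit) of_nat_less_iff power2_eq_square mult_less_cancel_left1)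
  then have "(int g, 0) \<in> Units (twisted_nearring P 0 j)"
    using assms(3,4) Units_twisted_nearring[OF \<open>Factorial_Ring.prime P\<close>] unfolding P_def
    by (auto dest: zdvd_imp_le)
  moreover have "(0, 1) \<in> nonunits (twisted_nearring P 0 j)"
    using nonunit_0_1[OF \<open>Factorial_Ring.prime P\<close>] by simp
  moreover assume "twisted_commutation (twisted_nearring (int p) 0 j) p i"
  ultimately obtain w where w: "w \<in> multiples (twisted_nearring P 0 j) p" and
    eq: "(int g, 0) \<otimes>\<^bsub>twisted_nearring P 0 j\<^esub> (0, 1) =
      (0, 1) \<otimes>\<^bsub>twisted_nearring P 0 j\<^esub> (int g, 0) [^]\<^bsub>twisted_nearring P 0 j\<^esub> i \<oplus>\<^bsub>twisted_nearring P 0 j\<^esub> w"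
    unfolding twisted_commutation_def P_def by blast
  have "snd w = 0"
    using w unfolding P_def by (rule snd_multiples_twisted_nearring)
  have "int g ^ j mod P = snd ((int g, 0) \<otimes>\<^bsub>twisted_nearring P 0 j\<^esub> (0, 1))"
    by (simp add: twisted_mult_def reduce_def)
  also have "\<dots> = int g ^ i mod P"
    unfolding eq using \<open>snd w = 0\<close> \<open>j \<ge> 1\<close>
    by (simp add: zero_power twisted_mult_def reduce_def fst_nat_pow_twisted_nearring[OF \<open>P > 1\<close>] mod_mod_cancel
        power2_eq_square mod_add_left_eq)
  finally have "[g ^ i = g ^ j] (mod p)"
    unfolding P_def by (simp add: cong_def flip: of_nat_power of_nat_mod)
  with assms(5) show False ..
qed

lemma exists_power_incongruent_mod_prime:
  fixes p :: nat
  assumes "Factorial_Ring.prime p" and "0 < i" "i < j" "j < p"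
  shows "\<exists>g. 0 < g \<and> g < p \<and> \<not> [g ^ i = g ^ j] (mod p)"
proof (rule ccontr)
  define d where "d = j - i"
  assume no_witness: "\<not> ?thesis"
  have "{1..<p} \<subseteq> {x \<in> {..<p}. [x ^ d = 1] (mod p)}"
  proof
    fix g assume g: "g \<in> {1..<p}"
    then have "\<not> p dvd g"
      by (auto dest: dvd_imp_le)
    then have "coprime (g ^ i) p"
      using prime_imp_coprime[OF assms(1)] by (simp add: coprime_commute)
    moreover have "[g ^ i * 1 = g ^ i * g ^ d] (mod p)"
      using no_witness g assms(3) unfolding d_def by (auto simp flip: power_add)
    ultimately have "[g ^ d = 1] (mod p)"
      using cong_mult_lcancel_nat cong_sym by blast
    with g show "g \<in> {x \<in> {..<p}. [x ^ d = 1] (mod p)}"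
      by simp
  qed
  then have "card {1..<p} \<le> card {x \<in> {..<p}. [x ^ d = 1] (mod p)}"
    by (intro card_mono) auto
  also have "\<dots> \<le> d"
    using roots_mod_prime_bound[OF assms(1), of d 1] assms unfolding d_def by simp
  finally show False
    using assms unfolding d_def by simp
qed

definition nearring_family :: "nat \<Rightarrow> nat \<Rightarrow> (int \<times> int) ring" where
  "nearring_family p i =
     (if i = p then twisted_nearring (int p) 1 1 else twisted_nearring (int p) 0 i)"

lemma local_nearring_family:
  "Factorial_Ring.prime p \<Longrightarrow> local_nearring (nearring_family p i)"
  by (simp add: nearring_family_def local_nearring_twisted_nearring)

lemma add_monoid_nearring_family:
  "p > 0 \<Longrightarrow>
    add_monoid (nearring_family p i) = integer_mod_group (p^2) \<times>\<times> integer_mod_group p"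
  unfolding nearring_family_def
  by (simp only: if_distrib[of add_monoid] add_monoid_twisted_nearring if_cancel)

lemma not_nearring_iso_family:
  assumes "Factorial_Ring.prime p" and "i < j" and "j \<le> p"
  shows "\<not> nearring_iso (nearring_family p i) (nearring_family p j)"
proof
  have nearring_1: "nearring_1 (nearring_family p k)" for k
    using local_nearring_family[OF assms(1)] by (simp add: local_nearring_def)
  assume iso: "nearring_iso (nearring_family p i) (nearring_family p j)"
  note invariants = nearring_iso_invariants[OF nearring_1 nearring_1 iso]
  have family_i: "nearring_family p i = twisted_nearring (int p) 0 i"
    using assms(2,3) by (simp add: nearring_family_def)
  consider "i = 0" | "i > 0" "j = p" | "i > 0" "j < p"
    using assms(3) by linarith
  then show False
  proof cases
    case 1
    have "nonunit_products_in_multiples (nearring_family p j) p"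
      using assms nonunit_products_in_multiples_twisted_nearring by (simp add: nearring_family_def)
    then show False
      using invariants(1) not_nonunit_products_in_multiples_twisted_nearring_0_0[OF assms(1)]
        1 family_i
      by simp
  next
    case 2
    then show False
      using invariants(1) nonunit_products_zero_twisted_nearring[OF assms(1), of i]
        not_nonunit_products_zero_twisted_nearring_1_1[OF assms(1)] family_i
      by (simp add: nearring_family_def)
  next
    case 3
    then obtain g where "0 < g" "g < p" "\<not> [g ^ i = g ^ j] (mod p)"
      using exists_power_incongruent_mod_prime[OF assms(1) 3(1) assms(2) 3(2)] by blast
    then show False
      using invariants(2) twisted_commutation_twisted_nearring[OF assms(1), of i]
        not_twisted_commutation_twisted_nearring[OF assms(1)] 3 assms(2) family_i
      by (simp add: nearring_family_def)
  qed
qed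

theorem theorem3:
  fixes p :: nat
  assumes "Factorial_Ring.prime p"
  shows "\<exists>N :: nat \<Rightarrow> (int \<times> int) ring.
           (\<forall>i\<le>p. local_nearring (N i) \<and>
              add_monoid (N i) \<cong> DirProd (integer_mod_group (p^2)) (integer_mod_group p)) \<and>
           (\<forall>i\<le>p. \<forall>j\<le>p. i \<noteq> j \<longrightarrow> \<not> nearring_iso (N i) (N j))"
proof (intro exI[of _ "nearring_family p"] conjI allI impI)
  fix i
  show "local_nearring (nearring_family p i)"
    using assms by (rule local_nearring_family)
  show "add_monoid (nearring_family p i) \<cong> integer_mod_group (p^2) \<times>\<times> integer_mod_group p"
    unfolding add_monoid_nearring_family[OF prime_gt_0_nat[OF assms]] by (rule iso_refl)
next
  fix i j assume "i \<le> p" "j \<le> p" "i \<noteq> j"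
  then consider "i < j" | "j < i"
    by linarith
  then show "\<not> nearring_iso (nearring_family p i) (nearring_family p j)"
  proof cases
    case 2
    have "nearring_1 (nearring_family p i)"
      using local_nearring_family[OF assms] by (simp add: local_nearring_def)
    then show ?thesis
      using not_nearring_iso_family[OF assms 2 \<open>i \<le> p\<close>] nearring_iso_sym by blast
  qed (use not_nearring_iso_family[OF assms _ \<open>j \<le> p\<close>] in blast)
qed

end
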